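(* Let $Q$ be a finite acyclic quiver, $\mathbf d\in\mathbb{N}Q_0$, $0\neq\Theta\in(\mathbb{Z}Q_0)^*$ with $\Theta(\mathbf d)=0$, and $0\ne\mathbf n\in\mathbb{N}Q_0$. Let $\kappa$ be a positive functional and $C$ a positive integer with $\kappa(\mathbf d)<C\cdot\gcd(\Theta)$, and form $(\widehat Q,\widehat{\mathbf d},\widehat\Theta)$ as below. Then $\widehat{\mathbf d}$ is $\widehat\Theta$-coprime, and a representation $(V,f)$ of $\widehat Q$ of dimension vector $\widehat{\mathbf d}$ is $\widehat\Theta$-semistable if and only if $V$ is $\Theta$-semistable and $\Theta(\mathbf{dim}U)<0$ for every proper subrepresentation $U\subsetneq V$ containing the image of $f$, i.e. satisfying $\mathrm{Im}(f_i)\subseteq U_i\subseteq V_i$ for all $i\in Q_0$.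
   Context: Quiver representations, subrepresentations, dimension vectors, and $\Theta$-semistability for $\Theta(\mathbf{dim}V)=0$ (namely $\Theta(\mathbf{dim}U)\le 0$ for all subrepresentations $U$) are as usual. A positive functional is $\kappa\in(\mathbb{Z}Q_0)^*$ with $\kappa(\mathbf e)>0$ for all $0\ne\mathbf e\in\mathbb{N}Q_0$; $\gcd(\Theta)$ is the gcd of the coordinates $\Theta_i$. A dimension vector $\mathbf d$ is $\Theta$-coprime if $\Theta(\mathbf e)\ne0$ for all $0\ne\mathbf e\le\mathbf d$, $\mathbf e\neq\mathbf d$ (componentwise). Framing construction: $\widehat Q$ has vertices $Q_0\cup\{0\}$, the arrows of $Q$, and $n_i$ additional arrows $0\to i$ for each $i\in Q_0$; $\widehat d_i=d_i$ for $i\in Q_0$ and $\widehat d_0=1$; $\widehat\Theta_i=C\Theta_i-\kappa_i$ for $i\in Q_0$ and $\widehat\Theta_0=\kappa(\mathbf d)$. A representation of $\widehat Q$ of dimension vector $\widehat{\mathbf d}$ is identified with a pair $(V,f)$ where $V$ is a representation of $Q$ of dimension vector $\mathbf d$ and $f=(f_i:\mathbb{C}^{n_i}\to V_i)_{i\in Q_0}$. *)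

theory Defs
  imports Complex_Main "HOL-Library.Function_Algebras"
begin

text \<open>We model C^n as the functions nat => complex vanishing at all indices >= n,
  inside the complex vector space of all functions nat => complex (pointwise operations).\<close>

definition fscale :: "complex \<Rightarrow> (nat \<Rightarrow> complex) \<Rightarrow> (nat \<Rightarrow> complex)" where
  "fscale c v = (\<lambda>j. c * v j)"

lemma vector_space_fscale: "vector_space fscale"
  by unfold_locales (auto simp: fscale_def algebra_simps)

definition cvs :: "nat \<Rightarrow> (nat \<Rightarrow> complex) set" where
  "cvs n = {v. \<forall>j\<ge>n. v j = 0}"

abbreviation csubspace :: "(nat \<Rightarrow> complex) set \<Rightarrow> bool" where
  "csubspace \<equiv> module.subspace fscale"

abbreviation cdim :: "(nat \<Rightarrow> complex) set \<Rightarrow> nat" where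
  "cdim \<equiv> vector_space.dim fscale"

text \<open>Linear map C^m -> C^n given by an n x m matrix (entries outside range ignored).\<close>
definition mat_app :: "nat \<Rightarrow> nat \<Rightarrow> (nat \<Rightarrow> nat \<Rightarrow> complex) \<Rightarrow> (nat \<Rightarrow> complex) \<Rightarrow> (nat \<Rightarrow> complex)" where
  "mat_app n m M v = (\<lambda>j. if j < n then (\<Sum>k<m. M j k * v k) else 0)"

text \<open>A quiver: vertex set = UNIV of a finite type 'v, arrow set A, source s, target t.\<close>

definition acyclic_quiver :: "'a set \<Rightarrow> ('a \<Rightarrow> 'v) \<Rightarrow> ('a \<Rightarrow> 'v) \<Rightarrow> bool" where
  "acyclic_quiver A s t \<longleftrightarrow> acyclic {(s a, t a) | a. a \<in> A}"

text \<open>A representation of dimension vector d: for each arrow a a matrix M a giving a linear map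
  C^(d (s a)) -> C^(d (t a)).\<close>

definition subrep :: "'a set \<Rightarrow> ('a \<Rightarrow> 'v) \<Rightarrow> ('a \<Rightarrow> 'v) \<Rightarrow> ('v \<Rightarrow> nat)
    \<Rightarrow> ('a \<Rightarrow> nat \<Rightarrow> nat \<Rightarrow> complex) \<Rightarrow> ('v \<Rightarrow> (nat \<Rightarrow> complex) set) \<Rightarrow> bool" where
  "subrep A s t d M U \<longleftrightarrow>
     (\<forall>i. csubspace (U i) \<and> U i \<subseteq> cvs (d i)) \<and>
     (\<forall>a\<in>A. \<forall>v\<in>U (s a). mat_app (d (t a)) (d (s a)) (M a) v \<in> U (t a))"

definition dimvec :: "('v \<Rightarrow> (nat \<Rightarrow> complex) set) \<Rightarrow> ('v \<Rightarrow> nat)" where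
  "dimvec U = (\<lambda>i. cdim (U i))"

definition fval :: "('v::finite \<Rightarrow> int) \<Rightarrow> ('v \<Rightarrow> nat) \<Rightarrow> int" where
  "fval \<Theta> e = (\<Sum>i\<in>UNIV. \<Theta> i * int (e i))"

definition semistable :: "'a set \<Rightarrow> ('a \<Rightarrow> 'v) \<Rightarrow> ('a \<Rightarrow> 'v) \<Rightarrow> ('v::finite \<Rightarrow> nat)
    \<Rightarrow> ('v \<Rightarrow> int) \<Rightarrow> ('a \<Rightarrow> nat \<Rightarrow> nat \<Rightarrow> complex) \<Rightarrow> bool" where
  "semistable A s t d \<Theta> M \<longleftrightarrow> (\<forall>U. subrep A s t d M U \<longrightarrow> fval \<Theta> (dimvec U) \<le> 0)"

definition positive_functional :: "('v::finite \<Rightarrow> int) \<Rightarrow> bool" where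
  "positive_functional \<kappa> \<longleftrightarrow> (\<forall>e. e \<noteq> (\<lambda>_. 0) \<longrightarrow> fval \<kappa> e > 0)"

definition theta_coprime :: "('v::finite \<Rightarrow> int) \<Rightarrow> ('v \<Rightarrow> nat) \<Rightarrow> bool" where
  "theta_coprime \<Theta> d \<longleftrightarrow>
     (\<forall>e. e \<noteq> (\<lambda>_. 0) \<and> (\<forall>i. e i \<le> d i) \<and> e \<noteq> d \<longrightarrow> fval \<Theta> e \<noteq> 0)"

definition gcd_fun :: "('v \<Rightarrow> int) \<Rightarrow> int" where
  "gcd_fun \<Theta> = Gcd (range \<Theta>)"

text \<open>Vertices of the framed quiver: 'v option, None being the new vertex 0.
  Arrows: Inl a for the arrows of Q, Inr (i,k) with k < n i for the n i new arrows 0 -> i.\<close>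

definition fr_arrows :: "'a set \<Rightarrow> ('v \<Rightarrow> nat) \<Rightarrow> ('a + ('v \<times> nat)) set" where
  "fr_arrows A n = Inl ` A \<union> {Inr (i, k) | i k. k < n i}"

fun fr_src :: "('a \<Rightarrow> 'v) \<Rightarrow> ('a + ('v \<times> nat)) \<Rightarrow> 'v option" where
  "fr_src s (Inl a) = Some (s a)"
| "fr_src s (Inr _) = None"

fun fr_tgt :: "('a \<Rightarrow> 'v) \<Rightarrow> ('a + ('v \<times> nat)) \<Rightarrow> 'v option" where
  "fr_tgt t (Inl a) = Some (t a)"
| "fr_tgt t (Inr (i, _)) = Some i"

definition fr_dim :: "('v \<Rightarrow> nat) \<Rightarrow> ('v option \<Rightarrow> nat)" where
  "fr_dim d = (\<lambda>x. case x of None \<Rightarrow> 1 | Some i \<Rightarrow> d i)"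

definition fr_theta :: "int \<Rightarrow> ('v::finite \<Rightarrow> int) \<Rightarrow> ('v \<Rightarrow> int) \<Rightarrow> ('v \<Rightarrow> nat) \<Rightarrow> ('v option \<Rightarrow> int)" where
  "fr_theta C \<Theta> \<kappa> d = (\<lambda>x. case x of None \<Rightarrow> fval \<kappa> d | Some i \<Rightarrow> C * \<Theta> i - \<kappa> i)"

text \<open>The representation (V,f) of the framed quiver: V given by matrices M, and
  f i a d_i x n_i matrix, the k-th new arrow 0 -> i acting by the k-th column of f i.\<close>

fun fr_rep :: "('a \<Rightarrow> nat \<Rightarrow> nat \<Rightarrow> complex) \<Rightarrow> ('v \<Rightarrow> nat \<Rightarrow> nat \<Rightarrow> complex)
    \<Rightarrow> ('a + ('v \<times> nat)) \<Rightarrow> nat \<Rightarrow> nat \<Rightarrow> complex" where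
  "fr_rep M f (Inl a) = M a"
| "fr_rep M f (Inr (i, k)) = (\<lambda>j l. f i j k)"

definition img_f :: "('v \<Rightarrow> nat) \<Rightarrow> ('v \<Rightarrow> nat) \<Rightarrow> ('v \<Rightarrow> nat \<Rightarrow> nat \<Rightarrow> complex) \<Rightarrow> 'v \<Rightarrow> (nat \<Rightarrow> complex) set" where
  "img_f d n f i = mat_app (d i) (n i) (f i) ` cvs (n i)"

end

theory Submission
  imports Defs
begin

text \<open>Write a dimension vector of the framed quiver as (e, e_0) with e \<le> d and e_0 \<in> {0,1}; then
  \<Theta>'(e, e_0) = C \<Theta>(e) - \<kappa>(e) + e_0 \<kappa>(d). As \<Theta>(e) is a multiple of gcd(\<Theta>) while
  0 \<le> \<kappa>(e) \<le> \<kappa>(d) < C gcd(\<Theta>), the sign of \<Theta>'(e, e_0) is that of \<Theta>(e) whenever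
  \<Theta>(e) \<noteq> 0, and otherwise that of -\<kappa>(e) resp. \<kappa>(d) - \<kappa>(e); this yields coprimality.
  A subrepresentation of (V, f) is a subrepresentation U of V together with 0 or the whole line at
  the framing vertex, the latter being allowed exactly when U contains the image of f, and in these
  two cases \<Theta>' \<le> 0 means \<Theta>(U) \<le> 0, resp. \<Theta>(U) < 0 or U = V.\<close>

interpretation V: vector_space fscale by (rule vector_space_fscale)

lemma sum_fun_apply: "(sum F A) x = (\<Sum>a\<in>A. F a x)"
  by (induction A rule: infinite_finite_induct) auto

definition unit_vec :: "nat \<Rightarrow> nat \<Rightarrow> complex" where
  "unit_vec j = (\<lambda>k. if k = j then 1 else 0)"

lemma subspace_cvs: "csubspace (cvs m)"
  unfolding V.subspace_def cvs_def fscale_def by auto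

lemma subspace_zero_space: "csubspace {0}"
  unfolding V.subspace_def by (auto simp: fscale_def)

lemma span_unit_vecs: "V.span (unit_vec ` {..<m}) = cvs m"
proof
  show "V.span (unit_vec ` {..<m}) \<subseteq> cvs m"
    by (rule V.span_minimal[OF _ subspace_cvs]) (auto simp: unit_vec_def cvs_def)
  show "cvs m \<subseteq> V.span (unit_vec ` {..<m})"
  proof
    fix v assume v: "v \<in> cvs m"
    have "v = (\<Sum>j<m. fscale (v j) (unit_vec j))"
      using v by (auto simp: sum_fun_apply fscale_def unit_vec_def cvs_def if_distrib cong: if_cong)
    also have "\<dots> \<in> V.span (unit_vec ` {..<m})"
      by (intro V.span_sum V.span_scale V.span_base) auto
    finally show "v \<in> V.span (unit_vec ` {..<m})" .
  qed
qed

lemma independent_unit_vecs: "V.independent (unit_vec ` {..<m})"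
proof (induction m)
  case 0
  then show ?case by (simp add: V.independent_empty)
next
  case (Suc m)
  have "unit_vec m \<notin> V.span (unit_vec ` {..<m})"
    unfolding span_unit_vecs by (simp add: cvs_def unit_vec_def)
  from V.independent_insertI[OF this Suc.IH] show ?case
    by (simp add: lessThan_Suc)
qed

lemma card_unit_vecs: "card (unit_vec ` {..<m}) = m"
proof -
  have "inj unit_vec"
    unfolding inj_def unit_vec_def by (metis zero_neq_one)
  then show ?thesis by (simp add: card_image inj_on_subset)
qed

lemma dim_cvs: "cdim (cvs m) = m"
proof -
  have "unit_vec ` {..<m} \<subseteq> cvs m"
    unfolding span_unit_vecs[symmetric] by (rule V.span_superset)
  then show ?thesis
    by (rule V.dim_unique[OF _ _ independent_unit_vecs card_unit_vecs]) (simp add: span_unit_vecs)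
qed

lemma dim_le_if_subset_cvs: "U \<subseteq> cvs m \<Longrightarrow> cdim U \<le> m"
  using V.dim_le_card[of U "unit_vec ` {..<m}"] span_unit_vecs card_unit_vecs by simp

lemma subspace_eq_cvs_if_dim_eq:
  assumes "csubspace U" "U \<subseteq> cvs m" "cdim U = m"
  shows "U = cvs m"
proof (rule ccontr)
  assume "U \<noteq> cvs m"
  then obtain w where w: "w \<in> cvs m" "w \<notin> U" using assms(2) by blast
  obtain B where B: "B \<subseteq> U" "V.independent B" "U \<subseteq> V.span B" "card B = cdim U"
    using V.basis_exists by blast
  have "w \<notin> V.span B"
    using w B assms(1) V.span_minimal by blast
  then have "V.independent (insert w B)"
    using B V.independent_insertI by blast
  moreover have "insert w B \<subseteq> V.span (unit_vec ` {..<m})"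
    unfolding span_unit_vecs using w B assms(2) by blast
  ultimately have bound: "finite (insert w B) \<and> card (insert w B) \<le> card (unit_vec ` {..<m})"
    by (intro V.independent_span_bound) auto
  have "w \<notin> B" using w B by blast
  then have "card (insert w B) = Suc (cdim U)"
    using bound B(4) by simp
  then show False using bound assms(3) card_unit_vecs by simp
qed

lemma dim_zero_space: "cdim {0} = 0"
  using V.dim_le_card[of "{0}" "{}"] by simp

lemma subspace_of_line_cases:
  assumes "csubspace L" "L \<subseteq> cvs 1"
  shows "L = {0} \<or> L = cvs 1"
proof (cases "\<exists>v\<in>L. v 0 \<noteq> 0")
  case True
  then obtain v where v: "v \<in> L" "v 0 \<noteq> 0" by blast
  have "w \<in> L" if w: "w \<in> cvs 1" for w
  proof -
    have "w j = fscale (w 0 / v 0) v j" for j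
      using w v assms(2) by (cases "j = 0") (auto simp: fscale_def cvs_def)
    then have "w = fscale (w 0 / v 0) v" ..
    then show ?thesis using V.subspace_scale[OF assms(1) v(1)] by metis
  qed
  then show ?thesis using assms(2) by blast
next
  case False
  have "v j = 0" if "v \<in> L" for v j
    using that False assms(2) by (cases "j = 0") (auto simp: cvs_def)
  then have "v = 0" if "v \<in> L" for v
    using that by (simp add: fun_eq_iff)
  then show ?thesis using V.subspace_0[OF assms(1)] by blast
qed

lemma unit_vec_in_line: "unit_vec 0 \<in> cvs 1"
  by (simp add: cvs_def unit_vec_def)

lemma line_neq_zero_space: "cvs 1 \<noteq> {0}"
proof
  assume "cvs 1 = {0}"
  then have "unit_vec 0 0 = 0"
    using unit_vec_in_line by simp
  then show False by (simp add: unit_vec_def)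
qed

lemma mat_app_zero: "mat_app m k N 0 = 0"
  by (auto simp: mat_app_def)

lemma dimvec_le_if_subrep:
  assumes "subrep A s t d M U"
  shows "dimvec U i \<le> d i"
  using assms dim_le_if_subset_cvs unfolding subrep_def dimvec_def by blast

lemma dimvec_eq_iff_full_if_subrep:
  assumes "subrep A s t d M U"
  shows "dimvec U = d \<longleftrightarrow> U = (\<lambda>i. cvs (d i))"
proof
  assume "dimvec U = d"
  then have "U i = cvs (d i)" for i
    using assms subspace_eq_cvs_if_dim_eq unfolding subrep_def dimvec_def by (metis fun_cong)
  then show "U = (\<lambda>i. cvs (d i))" ..
qed (simp add: dimvec_def dim_cvs)

lemma framing_arrow_in_img_f:
  assumes "k < n i" "v \<in> cvs 1"
  shows "mat_app (d i) 1 (\<lambda>j l. f i j k) v \<in> img_f d n f i"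
proof -
  define w :: "nat \<Rightarrow> complex" where "w = (\<lambda>l. if l = k then v 0 else 0)"
  have "w \<in> cvs (n i)"
    using assms(1) by (auto simp: w_def cvs_def)
  moreover have "mat_app (d i) 1 (\<lambda>j l. f i j k) v = mat_app (d i) (n i) (f i) w"
    using assms(1) by (auto simp: mat_app_def w_def if_distrib cong: if_cong)
  ultimately show ?thesis by (auto simp: img_f_def)
qed

lemma img_f_subset_if_framing_arrows:
  assumes "csubspace X"
    and "\<And>k. k < n i \<Longrightarrow> mat_app (d i) 1 (\<lambda>j l. f i j k) (unit_vec 0) \<in> X"
  shows "img_f d n f i \<subseteq> X"
proof
  fix x assume "x \<in> img_f d n f i"
  then obtain w where x: "x = mat_app (d i) (n i) (f i) w"
    by (auto simp: img_f_def)
  have "x = (\<Sum>k<n i. fscale (w k) (mat_app (d i) 1 (\<lambda>j l. f i j k) (unit_vec 0)))"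
    by (simp add: x sum_fun_apply fscale_def mat_app_def unit_vec_def mult.commute fun_eq_iff)
  also have "\<dots> \<in> X"
    by (intro V.subspace_sum[OF assms(1)] V.subspace_scale[OF assms(1)] assms(2)) auto
  finally show "x \<in> X" .
qed

lemma subrep_framedD:
  assumes W: "subrep (fr_arrows A n) (fr_src s) (fr_tgt t) (fr_dim d) (fr_rep M f) W"
  shows "subrep A s t d M (W \<circ> Some)"
    and "W None = {0} \<or> W None = cvs 1 \<and> (\<forall>i. img_f d n f i \<subseteq> W (Some i))"
proof -
  have sub: "csubspace (W x)" "W x \<subseteq> cvs (fr_dim d x)" for x
    using W unfolding subrep_def by blast+
  have arrow: "mat_app (fr_dim d (fr_tgt t a)) (fr_dim d (fr_src s a)) (fr_rep M f a) v
      \<in> W (fr_tgt t a)" if "a \<in> fr_arrows A n" "v \<in> W (fr_src s a)" for a v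
    using W that unfolding subrep_def by blast
  show "subrep A s t d M (W \<circ> Some)"
    unfolding subrep_def
  proof (intro conjI allI ballI)
    fix i show "csubspace ((W \<circ> Some) i)" "(W \<circ> Some) i \<subseteq> cvs (d i)"
      using sub[of "Some i"] by (simp_all add: fr_dim_def)
  next
    fix a v assume "a \<in> A" "v \<in> (W \<circ> Some) (s a)"
    then show "mat_app (d (t a)) (d (s a)) (M a) v \<in> (W \<circ> Some) (t a)"
      using arrow[of "Inl a" v] by (simp add: fr_arrows_def fr_dim_def)
  qed
  show "W None = {0} \<or> W None = cvs 1 \<and> (\<forall>i. img_f d n f i \<subseteq> W (Some i))"
  proof (cases "W None = {0}")
    case False
    then have line: "W None = cvs 1"
      using subspace_of_line_cases[OF sub(1), of None] sub(2)[of None] by (simp add: fr_dim_def)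
    have "img_f d n f i \<subseteq> W (Some i)" for i
    proof (rule img_f_subset_if_framing_arrows[OF sub(1)])
      fix k assume "k < n i"
      then show "mat_app (d i) 1 (\<lambda>j l. f i j k) (unit_vec 0) \<in> W (Some i)"
        using arrow[of "Inr (i, k)" "unit_vec 0"] unit_vec_in_line line
        by (simp add: fr_arrows_def fr_dim_def)
    qed
    then show ?thesis using line by blast
  qed simp
qed

lemma subrep_framedI:
  assumes U: "subrep A s t d M (W \<circ> Some)"
    and frame: "W None = {0} \<or> W None = cvs 1 \<and> (\<forall>i. img_f d n f i \<subseteq> W (Some i))"
  shows "subrep (fr_arrows A n) (fr_src s) (fr_tgt t) (fr_dim d) (fr_rep M f) W"
  unfolding subrep_def
proof (intro conjI allI ballI)
  have "csubspace (W None) \<and> W None \<subseteq> cvs 1"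
    using frame subspace_zero_space subspace_cvs by (auto simp: cvs_def)
  then show "csubspace (W x)" "W x \<subseteq> cvs (fr_dim d x)" for x
    using U unfolding subrep_def by (cases x; simp add: fr_dim_def)+
next
  fix a v assume a: "a \<in> fr_arrows A n" and v: "v \<in> W (fr_src s a)"
  show "mat_app (fr_dim d (fr_tgt t a)) (fr_dim d (fr_src s a)) (fr_rep M f a) v \<in> W (fr_tgt t a)"
  proof (cases a)
    case (Inl b)
    then show ?thesis using U a v unfolding subrep_def by (auto simp: fr_arrows_def fr_dim_def)
  next
    case (Inr p)
    then obtain i k where a_eq: "a = Inr (i, k)" and k: "k < n i"
      using a by (auto simp: fr_arrows_def)
    from frame consider "W None = {0}" | "W None = cvs 1" "img_f d n f i \<subseteq> W (Some i)"
      by blast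
    then show ?thesis
    proof cases
      case 1
      then show ?thesis
        using U a_eq v V.subspace_0 unfolding subrep_def by (auto simp: mat_app_zero)
    next
      case 2
      then show ?thesis
        using framing_arrow_in_img_f[of k n i v d f] k v a_eq by (auto simp: fr_dim_def)
    qed
  qed
qed

lemma fval_fr_theta:
  "fval (fr_theta C \<Theta> \<kappa> d) e
     = C * fval \<Theta> (e \<circ> Some) - fval \<kappa> (e \<circ> Some) + int (e None) * fval \<kappa> d"
proof -
  have "fval (fr_theta C \<Theta> \<kappa> d) e
      = fval \<kappa> d * int (e None) + (\<Sum>i\<in>UNIV. (C * \<Theta> i - \<kappa> i) * int (e (Some i)))"
    unfolding fval_def[of "fr_theta C \<Theta> \<kappa> d"] UNIV_option_conv
    by (subst sum.insert) (auto simp: sum.reindex fr_theta_def)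
  also have "(\<Sum>i\<in>UNIV. (C * \<Theta> i - \<kappa> i) * int (e (Some i)))
      = C * fval \<Theta> (e \<circ> Some) - fval \<kappa> (e \<circ> Some)"
    unfolding fval_def by (simp add: sum_subtractf sum_distrib_left algebra_simps)
  finally show ?thesis by simp
qed

lemma dimvec_comp_Some: "dimvec W \<circ> Some = dimvec (W \<circ> Some)"
  by (auto simp: dimvec_def)

lemma fval_diff:
  assumes "\<And>i. e i \<le> d i"
  shows "fval \<kappa> d - fval \<kappa> e = fval \<kappa> (\<lambda>i. d i - e i)"
  unfolding fval_def using assms by (simp add: sum_subtractf[symmetric] algebra_simps of_nat_diff)

lemma positive_functional_coeff_pos: "positive_functional \<kappa> \<Longrightarrow> 0 < \<kappa> i"
proof -
  assume "positive_functional \<kappa>"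
  moreover have "(\<lambda>j. if j = i then 1 else 0 :: nat) \<noteq> (\<lambda>_. 0)"
    by (metis one_neq_zero)
  ultimately have "0 < fval \<kappa> (\<lambda>j. if j = i then 1 else 0)"
    unfolding positive_functional_def by blast
  then show "0 < \<kappa> i"
    unfolding fval_def by (simp add: if_distrib cong: if_cong)
qed

lemma positive_functional_nonneg: "positive_functional \<kappa> \<Longrightarrow> 0 \<le> fval \<kappa> e"
  unfolding fval_def by (intro sum_nonneg) (simp add: less_imp_le positive_functional_coeff_pos)

lemma positive_functional_strict_mono:
  assumes "positive_functional \<kappa>" "\<And>i. e i \<le> d i" "e \<noteq> d"
  shows "fval \<kappa> e < fval \<kappa> d"
proof -
  have "(\<lambda>i. d i - e i) \<noteq> (\<lambda>_. 0)"
    using assms(2,3) by (metis diff_is_0_eq le_antisym ext)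
  then have "0 < fval \<kappa> (\<lambda>i. d i - e i)"
    using assms(1) unfolding positive_functional_def by blast
  then show ?thesis using fval_diff[of e d \<kappa>] assms(2) by simp
qed

lemma positive_functional_mono:
  assumes "positive_functional \<kappa>" "\<And>i. e i \<le> d i"
  shows "fval \<kappa> e \<le> fval \<kappa> d"
  using positive_functional_strict_mono[of \<kappa> e d] assms by (cases "e = d") auto

lemma gcd_fun_dvd_fval: "gcd_fun \<Theta> dvd fval \<Theta> e"
  unfolding fval_def gcd_fun_def by (intro dvd_sum dvd_mult2 Gcd_dvd) auto

context
  fixes \<Theta> \<kappa> :: "'v::finite \<Rightarrow> int" and C :: int and d :: "'v \<Rightarrow> nat"
  assumes C_pos: "0 < C" and \<kappa>_pos: "positive_functional \<kappa>"
    and \<kappa>_d_small: "fval \<kappa> d < C * gcd_fun \<Theta>"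
begin

lemma kappa_d_less_C_theta:
  assumes "0 < fval \<Theta> e"
  shows "fval \<kappa> d < C * fval \<Theta> e"
proof -
  have "gcd_fun \<Theta> \<le> fval \<Theta> e"
    using zdvd_imp_le[OF gcd_fun_dvd_fval[of \<Theta> e] assms] .
  then have "C * gcd_fun \<Theta> \<le> C * fval \<Theta> e"
    using C_pos by (simp add: mult_left_mono)
  then show ?thesis using \<kappa>_d_small by linarith
qed

lemma C_theta_plus_kappa_d_neg:
  assumes "fval \<Theta> e < 0"
  shows "C * fval \<Theta> e + fval \<kappa> d < 0"
proof -
  have "gcd_fun \<Theta> \<le> - fval \<Theta> e"
    using zdvd_imp_le[of "gcd_fun \<Theta>" "- fval \<Theta> e"] gcd_fun_dvd_fval[of \<Theta> e] assms by simp
  then have "C * gcd_fun \<Theta> \<le> C * (- fval \<Theta> e)"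
    using C_pos by (intro mult_left_mono) auto
  then show ?thesis using \<kappa>_d_small by linarith
qed

lemma unframed_nonpos_iff:
  assumes "\<And>i. e i \<le> d i"
  shows "C * fval \<Theta> e - fval \<kappa> e \<le> 0 \<longleftrightarrow> fval \<Theta> e \<le> 0"
proof (cases "fval \<Theta> e \<le> 0")
  case True
  then have "C * fval \<Theta> e \<le> 0"
    using C_pos by (simp add: mult_le_0_iff)
  then show ?thesis
    using True positive_functional_nonneg[OF \<kappa>_pos, of e] by linarith
next
  case False
  then show ?thesis
    using kappa_d_less_C_theta[of e] positive_functional_mono[of \<kappa> e d, OF \<kappa>_pos assms]
    by linarith
qed

lemma framed_nonpos_iff:
  assumes "\<And>i. e i \<le> d i" "e \<noteq> d"
  shows "C * fval \<Theta> e - fval \<kappa> e + fval \<kappa> d \<le> 0 \<longleftrightarrow> fval \<Theta> e < 0"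
proof (cases "fval \<Theta> e < 0")
  case True
  then show ?thesis
    using C_theta_plus_kappa_d_neg[of e] positive_functional_nonneg[OF \<kappa>_pos, of e] by linarith
next
  case False
  then have "0 \<le> C * fval \<Theta> e"
    using C_pos by simp
  then show ?thesis
    using False positive_functional_strict_mono[of \<kappa> e d, OF \<kappa>_pos assms] by linarith
qed

lemma fr_theta_coprime: "theta_coprime (fr_theta C \<Theta> \<kappa> d) (fr_dim d)"
  unfolding theta_coprime_def
proof (intro allI impI)
  fix e :: "'v option \<Rightarrow> nat"
  assume e: "e \<noteq> (\<lambda>_. 0) \<and> (\<forall>x. e x \<le> fr_dim d x) \<and> e \<noteq> fr_dim d"
  let ?e = "e \<circ> Some"
  have le: "?e i \<le> d i" for i
    using e by (metis comp_apply fr_dim_def option.simps(5))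
  have "e None \<le> 1"
    using e by (metis fr_dim_def option.simps(4))
  then consider "e None = 0" | "e None = 1" by linarith
  then show "fval (fr_theta C \<Theta> \<kappa> d) e \<noteq> 0"
  proof cases
    case 1
    have "?e \<noteq> (\<lambda>_. 0)"
    proof
      assume "?e = (\<lambda>_. 0)"
      then have "e x = 0" for x
        using 1 by (cases x) (auto simp: fun_eq_iff)
      then show False using e by auto
    qed
    then have "0 < fval \<kappa> ?e"
      using \<kappa>_pos unfolding positive_functional_def by blast
    moreover have "fval (fr_theta C \<Theta> \<kappa> d) e = C * fval \<Theta> ?e - fval \<kappa> ?e"
      using 1 by (simp add: fval_fr_theta)
    moreover have "C * fval \<Theta> ?e \<le> 0" if "fval \<Theta> ?e \<le> 0"
      using that C_pos by (simp add: mult_le_0_iff)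
    ultimately show ?thesis
      using unframed_nonpos_iff[of ?e, OF le] by linarith
  next
    case 2
    have "?e \<noteq> d"
    proof
      assume "?e = d"
      then have "e x = fr_dim d x" for x
        using 2 by (cases x) (auto simp: fun_eq_iff fr_dim_def)
      then show False using e by auto
    qed
    moreover have "fval (fr_theta C \<Theta> \<kappa> d) e = C * fval \<Theta> ?e - fval \<kappa> ?e + fval \<kappa> d"
      using 2 by (simp add: fval_fr_theta)
    ultimately show ?thesis
      using framed_nonpos_iff[of ?e, OF le] C_theta_plus_kappa_d_neg[of ?e]
        positive_functional_nonneg[OF \<kappa>_pos, of ?e] by linarith
  qed
qed

lemma fr_theta_subrep_nonpos_iff:
  assumes W: "subrep (fr_arrows A n) (fr_src s) (fr_tgt t) (fr_dim d) (fr_rep M f) W"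
    and \<Theta>_d: "fval \<Theta> d = 0"
  shows "fval (fr_theta C \<Theta> \<kappa> d) (dimvec W) \<le> 0 \<longleftrightarrow>
    (if W None = {0} then fval \<Theta> (dimvec (W \<circ> Some)) \<le> 0
     else W \<circ> Some = (\<lambda>i. cvs (d i)) \<or> fval \<Theta> (dimvec (W \<circ> Some)) < 0)"
proof -
  let ?U = "W \<circ> Some"
  have U: "subrep A s t d M ?U"
    using subrep_framedD(1)[OF W] .
  have le: "dimvec ?U i \<le> d i" for i
    using dimvec_le_if_subrep[OF U] .
  have fr_value: "fval (fr_theta C \<Theta> \<kappa> d) (dimvec W)
      = C * fval \<Theta> (dimvec ?U) - fval \<kappa> (dimvec ?U) + int (cdim (W None)) * fval \<kappa> d"
    by (simp add: fval_fr_theta dimvec_comp_Some) (simp add: dimvec_def)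
  from subrep_framedD(2)[OF W] consider "W None = {0}" | "W None = cvs 1"
    by blast
  then show ?thesis
  proof cases
    case 1
    then show ?thesis
      using fr_value unframed_nonpos_iff[of "dimvec ?U", OF le] by (simp add: dim_zero_space)
  next
    case 2
    show ?thesis
    proof (cases "?U = (\<lambda>i. cvs (d i))")
      case True
      then show ?thesis
        using fr_value 2 line_neq_zero_space \<Theta>_d dimvec_eq_iff_full_if_subrep[OF U]
        by (simp add: dim_cvs)
    next
      case False
      then show ?thesis
        using fr_value 2 line_neq_zero_space framed_nonpos_iff[of "dimvec ?U", OF le]
          dimvec_eq_iff_full_if_subrep[OF U]
        by (simp add: dim_cvs)
    qed
  qed
qed

lemma semistable_framed_iff:
  assumes "fval \<Theta> d = 0"
  shows "semistable (fr_arrows A n) (fr_src s) (fr_tgt t) (fr_dim d) (fr_theta C \<Theta> \<kappa> d) (fr_rep M f)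
    \<longleftrightarrow> semistable A s t d \<Theta> M \<and>
        (\<forall>U. subrep A s t d M U \<and> U \<noteq> (\<lambda>i. cvs (d i)) \<and> (\<forall>i. img_f d n f i \<subseteq> U i)
             \<longrightarrow> fval \<Theta> (dimvec U) < 0)"
  (is "?framed \<longleftrightarrow> ?unframed")
proof
  assume ?framed
  then have nonpos: "fval (fr_theta C \<Theta> \<kappa> d) (dimvec W) \<le> 0"
    if "subrep (fr_arrows A n) (fr_src s) (fr_tgt t) (fr_dim d) (fr_rep M f) W" for W
    using that unfolding semistable_def by blast
  have "fval \<Theta> (dimvec U) \<le> 0" if U: "subrep A s t d M U" for U
  proof -
    have "subrep (fr_arrows A n) (fr_src s) (fr_tgt t) (fr_dim d) (fr_rep M f) (case_option {0} U)"
      using U by (intro subrep_framedI) (auto simp: comp_def)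
    from fr_theta_subrep_nonpos_iff[OF this assms] nonpos[OF this] show ?thesis
      by (simp add: comp_def)
  qed
  moreover have "fval \<Theta> (dimvec U) < 0"
    if U: "subrep A s t d M U" "U \<noteq> (\<lambda>i. cvs (d i))" "\<forall>i. img_f d n f i \<subseteq> U i" for U
  proof -
    have "subrep (fr_arrows A n) (fr_src s) (fr_tgt t) (fr_dim d) (fr_rep M f) (case_option (cvs 1) U)"
      using U by (intro subrep_framedI) (auto simp: comp_def)
    from fr_theta_subrep_nonpos_iff[OF this assms] nonpos[OF this] show ?thesis
      using U(2) line_neq_zero_space by (simp add: comp_def)
  qed
  ultimately show ?unframed
    unfolding semistable_def by blast
next
  assume R: ?unframed
  show ?framed
    unfolding semistable_def
  proof (intro allI impI)
    fix W assume W: "subrep (fr_arrows A n) (fr_src s) (fr_tgt t) (fr_dim d) (fr_rep M f) W"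
    show "fval (fr_theta C \<Theta> \<kappa> d) (dimvec W) \<le> 0"
      using fr_theta_subrep_nonpos_iff[OF W assms] subrep_framedD[OF W] R
      unfolding semistable_def by auto
  qed
qed

end

theorem lemma2p4:
  fixes A :: "'a set" and s t :: "'a \<Rightarrow> 'v::finite"
    and d n :: "'v \<Rightarrow> nat" and \<Theta> \<kappa> :: "'v \<Rightarrow> int" and C :: int
  assumes "finite A" and "acyclic_quiver A s t"
    and "\<Theta> \<noteq> (\<lambda>_. 0)" and "fval \<Theta> d = 0"
    and "n \<noteq> (\<lambda>_. 0)"
    and "positive_functional \<kappa>" and "C > 0" and "fval \<kappa> d < C * gcd_fun \<Theta>"
  shows "theta_coprime (fr_theta C \<Theta> \<kappa> d) (fr_dim d)
    \<and> (\<forall>M f. semistable (fr_arrows A n) (fr_src s) (fr_tgt t) (fr_dim d) (fr_theta C \<Theta> \<kappa> d) (fr_rep M f)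
          \<longleftrightarrow> (semistable A s t d \<Theta> M \<and>
               (\<forall>U. subrep A s t d M U \<and> U \<noteq> (\<lambda>i. cvs (d i)) \<and> (\<forall>i. img_f d n f i \<subseteq> U i)
                    \<longrightarrow> fval \<Theta> (dimvec U) < 0)))"
  using fr_theta_coprime[OF assms(7,6,8)] semistable_framed_iff[OF assms(7,6,8,4)] by blast

end
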